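(* Consider the delay differential equation initial value problem $$\dot u(t)=f\bigl(t,u(t),u(t-\tau(t,u(t)))\bigr),\quad t\ge t_0,\qquad u(t_0+\theta)=\phi(\theta)\ \text{for } \theta\in[-\tau_{\max},0],$$ with $f$ smooth, and suppose its solution $u$ has a breaking point $\xi_j>t_0$ of order $k$. Let $\xi(h)$ be the mesh point $t_n$ of the numerical mesh (with step size $h$) nearest to $\xi_j$. Then a necessary condition for an explicit functional continuous Runge–Kutta (FCRK) method to have global order $p>k$ on this problem is that $$\xi(h)-\xi_j=\mathcal{O}\bigl(h^{p/(k+1)}\bigr).$$
   Context: A breaking point of order $k$ of the solution $u$ is a point $\xi$ at which all derivatives of $u$ up to the $k$-th exist and the $k$-th derivative is Lipschitz continuous, while the $(k+1)$-st derivative may be discontinuous there (so the Taylor expansions of $u$ from the left and from the right of $\xi$ agree up to order $k$ but may differ from order $k+1$ on). An explicit $s$-stage FCRK method with mesh $t_0<t_1<\dots$, steps $h_n=t_{n+1}-t_n$, computes a continuous approximation $u^h$ by $u^h(t_n+\theta h_n)=u^h(t_n)+h_n\sum_{i=1}^s b_i(\theta)k_{n,i}$ for $\theta\in(0,1]$, with stages $U_{n,i}=u^h(t_n)+h_n\sum_{j<i}a_{ij}k_{n,j}$ and $k_{n,i}=f\bigl(t_n+c_ih_n,U_{n,i},\eta_{n,i}(t_n+c_ih_n-\tau(t_n+c_ih_n,U_{n,i}))\bigr)$, where $\eta_{n,i}(t)$ equals $\phi$ for $t\le t_0$, $u^h(t)$ for $t\in[t_0,t_n]$, and $u^h(t_n)+h_n\sum_{j<i}a_{ij}(\theta)k_{n,j}$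 with $\theta=(t-t_n)/h_n$ for $t>t_n$. The method has global (uniform) order $p$ if $\sup_{t}\|u(t)-u^h(t)\|=\mathcal{O}(h^p)$ over the computational interval as the step size $h\to0$. *)

theory Defs
  imports "HOL-Analysis.Analysis" "HOL-Computational_Algebra.Polynomial"
begin

text \<open>Directional (Gateaux) derivative and its iterates; a map between finite-dimensional
  spaces is C-infinity iff all iterated directional derivatives exist and are continuous.\<close>

definition dirderiv :: "('a::real_normed_vector \<Rightarrow> 'b::real_normed_vector) \<Rightarrow> 'a \<Rightarrow> 'a \<Rightarrow> 'b" where
  "dirderiv g v x = vector_derivative (\<lambda>s::real. g (x + s *\<^sub>R v)) (at 0)"

fun iterd :: "'a list \<Rightarrow> ('a::real_normed_vector \<Rightarrow> 'b::real_normed_vector) \<Rightarrow> 'a \<Rightarrow> 'b" where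
  "iterd [] g = g"
| "iterd (v # vs) g = dirderiv (iterd vs g) v"

definition smooth_map :: "('a::real_normed_vector \<Rightarrow> 'b::real_normed_vector) \<Rightarrow> bool" where
  "smooth_map g \<longleftrightarrow>
     (\<forall>vs. continuous_on UNIV (iterd vs g) \<and>
        (\<forall>v x. (\<lambda>s::real. iterd vs g (x + s *\<^sub>R v)) differentiable (at 0)))"

definition vderiv :: "(real \<Rightarrow> 'a::real_normed_vector) \<Rightarrow> real \<Rightarrow> 'a" where
  "vderiv g t = vector_derivative g (at t)"

definition smooth_real_fun :: "(real \<Rightarrow> 'a::real_normed_vector) \<Rightarrow> bool" where
  "smooth_real_fun g \<longleftrightarrow>
     (\<forall>j t. ((vderiv ^^ j) g has_vector_derivative (vderiv ^^ Suc j) g t) (at t))"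

text \<open>xi is a breaking point of order k: near xi, u coincides from the left and from the right
  with smooth functions (left/right Taylor expansions) whose derivatives agree up to order k
  and differ at order k+1 (genuine discontinuity of the (k+1)-st derivative).\<close>

definition breaking_point :: "(real \<Rightarrow> 'a::real_normed_vector) \<Rightarrow> real \<Rightarrow> nat \<Rightarrow> bool" where
  "breaking_point u \<xi> k \<longleftrightarrow>
     (\<exists>\<epsilon>>0. \<exists>gL gR. smooth_real_fun gL \<and> smooth_real_fun gR \<and>
        (\<forall>t\<in>{\<xi>-\<epsilon>..\<xi>}. u t = gL t) \<and> (\<forall>t\<in>{\<xi>..\<xi>+\<epsilon>}. u t = gR t) \<and>
        (\<forall>j\<le>k. (vderiv ^^ j) gL \<xi> = (vderiv ^^ j) gR \<xi>) \<and>
        (vderiv ^^ Suc k) gL \<xi> \<noteq> (vderiv ^^ Suc k) gR \<xi>)"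

definition dde_solution ::
  "(real \<times> 'a \<times> 'a \<Rightarrow> 'a::real_normed_vector) \<Rightarrow> (real \<Rightarrow> 'a \<Rightarrow> real) \<Rightarrow> (real \<Rightarrow> 'a) \<Rightarrow>
   real \<Rightarrow> real \<Rightarrow> real \<Rightarrow> (real \<Rightarrow> 'a) \<Rightarrow> bool" where
  "dde_solution f \<tau> \<phi> \<tau>max t0 T u \<longleftrightarrow>
     (\<forall>\<theta>\<in>{-\<tau>max..0}. u (t0 + \<theta>) = \<phi> \<theta>) \<and>
     (\<forall>t\<in>{t0..T}. 0 \<le> \<tau> t (u t) \<and> \<tau> t (u t) \<le> \<tau>max) \<and>
     (\<forall>t\<in>{t0..T}. (u has_vector_derivative f (t, u t, u (t - \<tau> t (u t)))) (at t within {t0..T}))"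

definition admissible_mesh :: "real \<Rightarrow> real \<Rightarrow> real \<Rightarrow> (nat \<Rightarrow> real) \<Rightarrow> bool" where
  "admissible_mesh t0 T h tm \<longleftrightarrow>
     tm 0 = t0 \<and> (\<forall>n. tm n < tm (Suc n) \<and> tm (Suc n) - tm n \<le> h) \<and> (\<exists>N. T \<le> tm N)"

text \<open>uh is the continuous approximation produced on mesh tm by the explicit s-stage FCRK method
  with coefficients A (a_ij), continuous-extension weights At (a_ij(theta)), nodes c and
  polynomial weights b_i = poly (B i).\<close>

definition fcrk_solution ::
  "nat \<Rightarrow> (nat \<Rightarrow> nat \<Rightarrow> real) \<Rightarrow> (nat \<Rightarrow> nat \<Rightarrow> real \<Rightarrow> real) \<Rightarrow> (nat \<Rightarrow> real) \<Rightarrow> (nat \<Rightarrow> real poly) \<Rightarrow>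
   (real \<times> 'a \<times> 'a \<Rightarrow> 'a::real_normed_vector) \<Rightarrow> (real \<Rightarrow> 'a \<Rightarrow> real) \<Rightarrow> (real \<Rightarrow> 'a) \<Rightarrow> real \<Rightarrow>
   (nat \<Rightarrow> real) \<Rightarrow> (real \<Rightarrow> 'a) \<Rightarrow> bool" where
  "fcrk_solution s A At c B f \<tau> \<phi> t0 tm uh \<longleftrightarrow>
     uh t0 = \<phi> 0 \<and>
     (\<forall>n. \<exists>K :: nat \<Rightarrow> 'a.
        let hn = tm (Suc n) - tm n in
        (\<forall>\<theta>\<in>{0<..1}. uh (tm n + \<theta> * hn) = uh (tm n) + hn *\<^sub>R (\<Sum>i<s. poly (B i) \<theta> *\<^sub>R K i)) \<and>
        (\<forall>i<s.
           let ti = tm n + c i * hn;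
               U = uh (tm n) + hn *\<^sub>R (\<Sum>j<i. A i j *\<^sub>R K j);
               \<eta> = (\<lambda>t. if t \<le> t0 then \<phi> (t - t0)
                        else if t \<le> tm n then uh t
                        else uh (tm n) + hn *\<^sub>R (\<Sum>j<i. At i j ((t - tm n) / hn) *\<^sub>R K j))
           in K i = f (ti, U, \<eta> (ti - \<tau> ti U))))"

definition global_order ::
  "real \<Rightarrow> real \<Rightarrow> real \<Rightarrow> (real \<Rightarrow> 'a::real_normed_vector) \<Rightarrow> (real \<Rightarrow> real \<Rightarrow> 'a) \<Rightarrow> nat \<Rightarrow> bool" where
  "global_order H t0 T u uh p \<longleftrightarrow>
     (\<exists>C h0. 0 < h0 \<and> (\<forall>h. 0 < h \<and> h \<le> h0 \<and> h \<le> H \<longrightarrow>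
        (\<forall>t\<in>{t0..T}. norm (u t - uh h t) \<le> C * h ^ p)))"

end

theory Submission
  imports Defs
begin

text \<open>On the mesh step containing the breaking point, an explicit FCRK approximation is a
  polynomial of degree at most m = (sum of the degrees of the weights b_i).  With M = m + k + 2,
  take M + 1 equally spaced nodes with spacing \<delta>, all but the last one to the left of \<xi>.  The M-th finite
  difference annihilates the polynomial, whereas on u it only sees the jump of the (k+1)-st
  derivative and is therefore of exact order \<delta>^(k+1).  Since u - u^h = O(h^p), the difference
  is also O(h^p), so \<delta> = O(h^(p/(k+1))); choosing \<delta> proportional to the distance from \<xi> to the
  nearer end of the step gives the claim.\<close>

text \<open>fdiff M g is (-1)^M times the M-th forward difference of g at 0.\<close>

definition fdiff :: "nat \<Rightarrow> (nat \<Rightarrow> real) \<Rightarrow> real" where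
  "fdiff M g = (\<Sum>j\<le>M. (-1)^j * real (M choose j) * g j)"

lemma fdiff_sum: "fdiff M (\<lambda>j. \<Sum>i\<in>I. g i j) = (\<Sum>i\<in>I. fdiff M (g i))"
  unfolding fdiff_def by (simp add: sum_distrib_left sum.swap[of _ I])

lemma fdiff_cmult: "fdiff M (\<lambda>j. c * g j) = c * fdiff M g"
  unfolding fdiff_def by (simp add: sum_distrib_left algebra_simps)

lemma fdiff_diff: "fdiff M (\<lambda>j. g j - g' j) = fdiff M g - fdiff M g'"
  unfolding fdiff_def by (simp add: sum_subtractf algebra_simps)

lemma fdiff_Suc: "fdiff (Suc M) g = fdiff M (\<lambda>j. g j - g (Suc j))"
proof -
  have shift: "fdiff M g = g 0 + (\<Sum>j\<le>M. (-1)^Suc j * real (M choose Suc j) * g (Suc j))"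
  proof -
    have "fdiff M g = (\<Sum>j\<le>Suc M. (-1)^j * real (M choose j) * g j)"
      unfolding fdiff_def by simp
    also have "\<dots> = g 0 + (\<Sum>j\<le>M. (-1)^Suc j * real (M choose Suc j) * g (Suc j))"
      by (subst sum.atMost_Suc_shift) simp
    finally show ?thesis .
  qed
  have "fdiff (Suc M) g = g 0 + (\<Sum>j\<le>M. (-1)^Suc j * real (Suc M choose Suc j) * g (Suc j))"
    unfolding fdiff_def by (subst sum.atMost_Suc_shift) simp
  also have "\<dots> = g 0 + (\<Sum>j\<le>M. (-1)^Suc j * real (M choose Suc j) * g (Suc j))
       + (\<Sum>j\<le>M. (-1)^Suc j * real (M choose j) * g (Suc j))"
    by (simp add: sum.distrib[symmetric] algebra_simps)
  also have "(\<Sum>j\<le>M. (-1)^Suc j * real (M choose j) * g (Suc j)) = - fdiff M (\<lambda>j. g (Suc j))"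
    unfolding fdiff_def by (simp add: sum_negf[symmetric])
  finally show ?thesis
    using shift by (simp add: fdiff_diff)
qed

lemma fdiff_affine_power:
  assumes "i < M"
  shows "fdiff M (\<lambda>j. (\<alpha> + \<beta> * real j) ^ i) = 0"
  using assms
proof (induction M arbitrary: i)
  case 0
  then show ?case by simp
next
  case (Suc M)
  have "(\<alpha> + \<beta> * real j) ^ i - (\<alpha> + \<beta> * real (Suc j)) ^ i
      = -1 * (\<Sum>r<i. real (i choose r) * \<beta> ^ (i - r) * (\<alpha> + \<beta> * real j) ^ r)" for j
  proof -
    have "(\<alpha> + \<beta> * real (Suc j)) ^ i = ((\<alpha> + \<beta> * real j) + \<beta>) ^ i"
      by (simp add: algebra_simps)
    also have "\<dots> = (\<Sum>r\<le>i. real (i choose r) * \<beta> ^ (i - r) * (\<alpha> + \<beta> * real j) ^ r)"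
      unfolding binomial_ring by (intro sum.cong refl) (simp add: mult_ac)
    finally show ?thesis
      by (simp add: lessThan_Suc_atMost[symmetric])
  qed
  then show ?case
    using Suc by (simp only: fdiff_Suc fdiff_cmult fdiff_sum) simp
qed

lemma fdiff_affine_poly:
  "degree Q < M \<Longrightarrow> fdiff M (\<lambda>j. poly Q (\<alpha> + \<beta> * real j)) = 0"
  by (simp add: poly_altdef fdiff_sum fdiff_cmult fdiff_affine_power)

lemma fdiff_bound:
  assumes "\<And>j. j \<le> M \<Longrightarrow> \<bar>g j\<bar> \<le> E"
  shows "\<bar>fdiff M g\<bar> \<le> 2^M * E"
proof -
  have "\<bar>fdiff M g\<bar> \<le> (\<Sum>j\<le>M. \<bar>(-1)^j * real (M choose j) * g j\<bar>)"
    unfolding fdiff_def by (rule sum_abs)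
  also have "\<dots> \<le> (\<Sum>j\<le>M. real (M choose j) * E)"
    by (rule sum_mono) (simp add: abs_mult assms mult_left_mono)
  also have "\<dots> = 2^M * E"
    using choose_row_sum[of M] by (simp add: sum_distrib_right[symmetric] flip: of_nat_sum)
  finally show ?thesis .
qed

lemma fdiff_near_affine_poly:
  assumes "degree Q < M" and "\<And>j. j \<le> M \<Longrightarrow> \<bar>g j - poly Q (\<alpha> + \<beta> * real j)\<bar> \<le> E"
  shows "\<bar>fdiff M g\<bar> \<le> 2^M * E"
proof -
  have "fdiff M g = fdiff M (\<lambda>j. g j - poly Q (\<alpha> + \<beta> * real j))"
    by (simp add: fdiff_diff fdiff_affine_poly[OF assms(1)])
  then show ?thesis
    using fdiff_bound[of M "\<lambda>j. g j - poly Q (\<alpha> + \<beta> * real j)" E] assms(2) by simp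
qed

lemma fdiff_change_last:
  assumes "\<And>j. j < M \<Longrightarrow> g' j = g j"
  shows "fdiff M g' = fdiff M g + (-1)^M * (g' M - g M)"
proof -
  have "fdiff M g' - fdiff M g = (\<Sum>j\<le>M. (-1)^j * real (M choose j) * (g' j - g j))"
    unfolding fdiff_def by (simp add: sum_subtractf[symmetric] algebra_simps)
  also have "\<dots> = (-1)^M * (g' M - g M)"
  proof -
    have "(\<Sum>j<M. (-1)^j * real (M choose j) * (g' j - g j)) = 0"
      using assms by (intro sum.neutral) auto
    then show ?thesis by (simp flip: lessThan_Suc_atMost)
  qed
  finally show ?thesis by simp
qed

lemma smooth_real_fun_inner_taylor_bound:
  fixes g :: "real \<Rightarrow> 'a::real_inner"
  assumes "smooth_real_fun g"
  obtains K where "K \<ge> 0" and "\<And>y. \<bar>y\<bar> \<le> 1 \<Longrightarrow>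
     \<bar>g (\<xi> + y) \<bullet> a - (\<Sum>m<n. ((vderiv ^^ m) g \<xi> \<bullet> a) / fact m * y ^ m)\<bar> \<le> K * \<bar>y\<bar> ^ n"
proof -
  define D where "D = (\<lambda>m y. (vderiv ^^ m) g (\<xi> + y) \<bullet> a)"
  have D_deriv: "(D m has_real_derivative D (Suc m) y) (at y)" for m y
  proof -
    have "((vderiv ^^ m) g has_vector_derivative (vderiv ^^ Suc m) g (\<xi> + y)) (at (\<xi> + y))"
      using assms unfolding smooth_real_fun_def by blast
    then have "((\<lambda>t. (vderiv ^^ m) g t \<bullet> a) has_derivative
        (\<lambda>t. (t *\<^sub>R (vderiv ^^ Suc m) g (\<xi> + y)) \<bullet> a)) (at (\<xi> + y))"
      unfolding has_vector_derivative_def by (intro derivative_eq_intros) auto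
    then have "((\<lambda>t. (vderiv ^^ m) g t \<bullet> a) has_real_derivative D (Suc m) y) (at (\<xi> + y))"
      by (simp add: D_def has_real_derivative_iff_has_vector_derivative has_vector_derivative_def)
    then have "((\<lambda>t. (vderiv ^^ m) g t \<bullet> a) \<circ> (\<lambda>y. \<xi> + y) has_real_derivative D (Suc m) y * 1) (at y)"
      by (intro DERIV_chain) (auto intro!: derivative_eq_intros)
    then show ?thesis
      by (simp add: D_def o_def)
  qed
  have "continuous_on {-1..1} (D n)"
    using D_deriv by (meson DERIV_isCont continuous_at_imp_continuous_on)
  then have "bounded (D n ` {-1..1})"
    by (intro compact_imp_bounded compact_continuous_image) auto
  then obtain B where B: "\<And>t. t \<in> {-1..1} \<Longrightarrow> \<bar>D n t\<bar> \<le> B"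
    unfolding bounded_iff by (auto simp del: atLeastAtMost_iff)
  show ?thesis
  proof
    show "0 \<le> \<bar>B\<bar> / fact n" by simp
    fix y :: real
    assume y: "\<bar>y\<bar> \<le> 1"
    obtain t where t: "\<bar>t\<bar> \<le> \<bar>y\<bar>"
      and maclaurin: "D 0 y = (\<Sum>m<n. D m 0 / fact m * y ^ m) + D n t / fact n * y ^ n"
      using Maclaurin_all_le[of D "D 0" y n] D_deriv by blast
    have "t \<in> {-1..1}"
      using t y by auto
    then have "\<bar>D n t\<bar> \<le> \<bar>B\<bar>"
      using B by fastforce
    then have "\<bar>D n t / fact n * y ^ n\<bar> \<le> \<bar>B\<bar> / fact n * \<bar>y\<bar> ^ n"
      by (simp add: abs_mult power_abs divide_right_mono mult_right_mono)
    then show "\<bar>g (\<xi> + y) \<bullet> a - (\<Sum>m<n. ((vderiv ^^ m) g \<xi> \<bullet> a) / fact m * y ^ m)\<bar>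
        \<le> \<bar>B\<bar> / fact n * \<bar>y\<bar> ^ n"
      using maclaurin by (simp add: D_def)
  qed
qed

lemma smooth_real_fun_jump_lower_bound:
  fixes gL gR :: "real \<Rightarrow> 'a::real_inner"
  assumes "smooth_real_fun gL" and "smooth_real_fun gR"
    and agree: "\<forall>j\<le>k. (vderiv ^^ j) gL \<xi> = (vderiv ^^ j) gR \<xi>"
    and a_def: "a = (vderiv ^^ Suc k) gR \<xi> - (vderiv ^^ Suc k) gL \<xi>"
  obtains K where "K \<ge> 0" and "\<And>\<delta>. \<bar>\<delta>\<bar> \<le> 1 \<Longrightarrow>
    (a \<bullet> a) / fact (Suc k) * \<delta> ^ Suc k \<le> (gR (\<xi> + \<delta>) - gL (\<xi> + \<delta>)) \<bullet> a + K * \<bar>\<delta>\<bar> ^ Suc (Suc k)"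
proof -
  define taylor where "taylor = (\<lambda>g \<delta>. \<Sum>m<Suc (Suc k). ((vderiv ^^ m) g \<xi> \<bullet> a) / fact m * \<delta> ^ m)"
  obtain KL where KL: "KL \<ge> 0" "\<And>\<delta>. \<bar>\<delta>\<bar> \<le> 1 \<Longrightarrow> \<bar>gL (\<xi> + \<delta>) \<bullet> a - taylor gL \<delta>\<bar> \<le> KL * \<bar>\<delta>\<bar> ^ Suc (Suc k)"
    using smooth_real_fun_inner_taylor_bound[OF assms(1)] unfolding taylor_def by blast
  obtain KR where KR: "KR \<ge> 0" "\<And>\<delta>. \<bar>\<delta>\<bar> \<le> 1 \<Longrightarrow> \<bar>gR (\<xi> + \<delta>) \<bullet> a - taylor gR \<delta>\<bar> \<le> KR * \<bar>\<delta>\<bar> ^ Suc (Suc k)"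
    using smooth_real_fun_inner_taylor_bound[OF assms(2)] unfolding taylor_def by blast
  have taylor_jump: "taylor gR \<delta> - taylor gL \<delta> = (a \<bullet> a) / fact (Suc k) * \<delta> ^ Suc k" for \<delta>
  proof -
    have "taylor gR \<delta> - taylor gL \<delta>
        = (\<Sum>m<Suc (Suc k). (((vderiv ^^ m) gR \<xi> - (vderiv ^^ m) gL \<xi>) \<bullet> a) / fact m * \<delta> ^ m)"
      unfolding taylor_def sum_subtractf[symmetric]
      by (intro sum.cong) (auto simp: inner_diff_left diff_divide_distrib algebra_simps)
    also have "\<dots> = (\<Sum>m<Suc k. (((vderiv ^^ m) gR \<xi> - (vderiv ^^ m) gL \<xi>) \<bullet> a) / fact m * \<delta> ^ m)
         + (a \<bullet> a) / fact (Suc k) * \<delta> ^ Suc k"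
      by (simp add: a_def)
    also have "(\<Sum>m<Suc k. (((vderiv ^^ m) gR \<xi> - (vderiv ^^ m) gL \<xi>) \<bullet> a) / fact m * \<delta> ^ m) = 0"
      using agree by (intro sum.neutral) auto
    finally show ?thesis
      by simp
  qed
  show ?thesis
  proof
    show "0 \<le> KL + KR"
      using KL KR by simp
    fix \<delta> :: real
    assume "\<bar>\<delta>\<bar> \<le> 1"
    show "(a \<bullet> a) / fact (Suc k) * \<delta> ^ Suc k
        \<le> (gR (\<xi> + \<delta>) - gL (\<xi> + \<delta>)) \<bullet> a + (KL + KR) * \<bar>\<delta>\<bar> ^ Suc (Suc k)"
      using KL(2)[OF \<open>\<bar>\<delta>\<bar> \<le> 1\<close>] KR(2)[OF \<open>\<bar>\<delta>\<bar> \<le> 1\<close>] taylor_jump[of \<delta>]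
      by (simp only: inner_diff_left distrib_right abs_le_iff) linarith
  qed
qed

lemma smooth_real_fun_fdiff_bound:
  fixes g :: "real \<Rightarrow> 'a::real_inner"
  assumes "smooth_real_fun g" and "0 < M"
  obtains K where "K \<ge> 0" and "\<And>\<delta>. 0 \<le> \<delta> \<Longrightarrow> real M * \<delta> \<le> 1 \<Longrightarrow>
    \<bar>fdiff M (\<lambda>j. g (\<xi> + (real j + 1 - real M) * \<delta>) \<bullet> a)\<bar> \<le> K * \<delta> ^ M"
proof -
  define c where "c = (\<lambda>m. ((vderiv ^^ m) g \<xi> \<bullet> a) / fact m)"
  obtain K where K: "K \<ge> 0" "\<And>y. \<bar>y\<bar> \<le> 1 \<Longrightarrow> \<bar>g (\<xi> + y) \<bullet> a - (\<Sum>m<M. c m * y ^ m)\<bar> \<le> K * \<bar>y\<bar> ^ M"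
    using smooth_real_fun_inner_taylor_bound[OF assms(1)] unfolding c_def by blast
  show ?thesis
  proof
    show "0 \<le> 2 ^ M * K * real M ^ M"
      using K by simp
    fix \<delta> :: real
    assume \<delta>: "0 \<le> \<delta>" "real M * \<delta> \<le> 1"
    have node_bound: "\<bar>g (\<xi> + (real j + 1 - real M) * \<delta>) \<bullet> a
        - (\<Sum>m<M. c m * ((1 - real M) * \<delta> + \<delta> * real j) ^ m)\<bar> \<le> K * real M ^ M * \<delta> ^ M"
      if "j \<le> M" for j
    proof -
      have "\<bar>real j + 1 - real M\<bar> \<le> real M"
        using that assms(2) by auto
      then have y: "\<bar>(real j + 1 - real M) * \<delta>\<bar> \<le> real M * \<delta>"
        using \<delta> by (simp add: abs_mult mult_right_mono)
      have "(1 - real M) * \<delta> + \<delta> * real j = (real j + 1 - real M) * \<delta>"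
        by (simp add: algebra_simps)
      then have "\<bar>g (\<xi> + (real j + 1 - real M) * \<delta>) \<bullet> a
          - (\<Sum>m<M. c m * ((1 - real M) * \<delta> + \<delta> * real j) ^ m)\<bar> \<le> K * \<bar>(real j + 1 - real M) * \<delta>\<bar> ^ M"
        using K(2) y \<delta> by simp
      also have "\<dots> \<le> K * (real M * \<delta>) ^ M"
        using y K(1) by (intro mult_left_mono power_mono) auto
      finally show ?thesis
        by (simp add: power_mult_distrib mult.assoc)
    qed
    have "fdiff M (\<lambda>j. \<Sum>m<M. c m * ((1 - real M) * \<delta> + \<delta> * real j) ^ m) = 0"
      by (simp add: fdiff_sum fdiff_cmult fdiff_affine_power)
    then have "fdiff M (\<lambda>j. g (\<xi> + (real j + 1 - real M) * \<delta>) \<bullet> a)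
        = fdiff M (\<lambda>j. g (\<xi> + (real j + 1 - real M) * \<delta>) \<bullet> a
            - (\<Sum>m<M. c m * ((1 - real M) * \<delta> + \<delta> * real j) ^ m))"
      by (simp add: fdiff_diff)
    also have "\<bar>\<dots>\<bar> \<le> 2 ^ M * (K * real M ^ M * \<delta> ^ M)"
      by (rule fdiff_bound) (rule node_bound)
    finally show "\<bar>fdiff M (\<lambda>j. g (\<xi> + (real j + 1 - real M) * \<delta>) \<bullet> a)\<bar>
        \<le> 2 ^ M * K * real M ^ M * \<delta> ^ M"
      by (simp add: mult.assoc)
  qed
qed

text \<open>Only the last node \<xi> + \<delta> lies to the right of \<xi>: the difference of the left piece is
  O(\<delta>^M), and the last node contributes the jump of the Taylor expansions, of order \<delta>^(k+1).\<close>

lemma smooth_pieces_fdiff_lower_bound: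
  fixes gL gR :: "real \<Rightarrow> 'a::real_inner"
  assumes smooth: "smooth_real_fun gL" "smooth_real_fun gR"
    and agree: "\<forall>j\<le>k. (vderiv ^^ j) gL \<xi> = (vderiv ^^ j) gR \<xi>"
    and a_def: "a = (vderiv ^^ Suc k) gR \<xi> - (vderiv ^^ Suc k) gL \<xi>"
    and "Suc (Suc k) \<le> M"
  obtains K where "K \<ge> 0" and "\<And>\<delta>. 0 < \<delta> \<Longrightarrow> real M * \<delta> \<le> 1 \<Longrightarrow>
    (a \<bullet> a) / fact (Suc k) * \<delta> ^ Suc k \<le>
      \<bar>fdiff M (\<lambda>j. (if j = M then gR else gL) (\<xi> + (real j + 1 - real M) * \<delta>) \<bullet> a)\<bar>
      + K * \<delta> ^ Suc (Suc k)"
proof -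
  obtain K1 where K1: "K1 \<ge> 0" "\<And>\<delta>. \<bar>\<delta>\<bar> \<le> 1 \<Longrightarrow> (a \<bullet> a) / fact (Suc k) * \<delta> ^ Suc k
      \<le> (gR (\<xi> + \<delta>) - gL (\<xi> + \<delta>)) \<bullet> a + K1 * \<bar>\<delta>\<bar> ^ Suc (Suc k)"
    using smooth_real_fun_jump_lower_bound[OF smooth agree a_def] by blast
  have "0 < M"
    using assms(5) by simp
  obtain K2 where K2: "K2 \<ge> 0" "\<And>\<delta>. 0 \<le> \<delta> \<Longrightarrow> real M * \<delta> \<le> 1 \<Longrightarrow>
      \<bar>fdiff M (\<lambda>j. gL (\<xi> + (real j + 1 - real M) * \<delta>) \<bullet> a)\<bar> \<le> K2 * \<delta> ^ M"
    using smooth_real_fun_fdiff_bound[OF smooth(1) \<open>0 < M\<close>] by blast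
  show ?thesis
  proof
    show "0 \<le> K1 + K2"
      using K1(1) K2(1) by simp
    fix \<delta> :: real
    assume \<delta>: "0 < \<delta>" "real M * \<delta> \<le> 1"
    have "\<delta> \<le> real M * \<delta>"
      using mult_right_mono[of 1 "real M" \<delta>] \<delta>(1) \<open>0 < M\<close> by simp
    then have "\<delta> \<le> 1"
      using \<delta>(2) by linarith
    define w where "w = (\<lambda>j. (if j = M then gR else gL) (\<xi> + (real j + 1 - real M) * \<delta>) \<bullet> a)"
    define wL where "wL = (\<lambda>j. gL (\<xi> + (real j + 1 - real M) * \<delta>) \<bullet> a)"
    have "fdiff M w = fdiff M wL + (-1) ^ M * ((gR (\<xi> + \<delta>) - gL (\<xi> + \<delta>)) \<bullet> a)"
      by (subst fdiff_change_last[of M w wL]) (simp_all add: w_def wL_def inner_diff_left)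
    moreover have "\<bar>(-1) ^ M * ((gR (\<xi> + \<delta>) - gL (\<xi> + \<delta>)) \<bullet> a)\<bar> = \<bar>(gR (\<xi> + \<delta>) - gL (\<xi> + \<delta>)) \<bullet> a\<bar>"
      by (simp add: abs_mult)
    moreover have "\<bar>fdiff M wL\<bar> \<le> K2 * \<delta> ^ Suc (Suc k)"
    proof -
      have "\<delta> ^ M \<le> \<delta> ^ Suc (Suc k)"
        using \<delta>(1) \<open>\<delta> \<le> 1\<close> assms(5) by (intro power_decreasing) auto
      then show ?thesis
        using K2 \<delta> unfolding wL_def by (meson mult_left_mono order_trans less_imp_le)
    qed
    ultimately show "(a \<bullet> a) / fact (Suc k) * \<delta> ^ Suc k \<le> \<bar>fdiff M w\<bar> + (K1 + K2) * \<delta> ^ Suc (Suc k)"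
      using K1(2)[of \<delta>] \<delta>(1) \<open>\<delta> \<le> 1\<close> by (simp add: distrib_right)
  qed
qed

lemma breaking_point_fdiff_lower_bound:
  fixes u :: "real \<Rightarrow> 'a::real_inner"
  assumes "breaking_point u \<xi> k" and "Suc (Suc k) \<le> M"
  obtains a c0 \<delta>0 where "0 < c0" and "0 < \<delta>0" and "\<And>\<delta>. 0 < \<delta> \<Longrightarrow> \<delta> \<le> \<delta>0 \<Longrightarrow>
    c0 * \<delta> ^ Suc k \<le> \<bar>fdiff M (\<lambda>j. u (\<xi> + (real j + 1 - real M) * \<delta>) \<bullet> a)\<bar>"
proof -
  obtain \<epsilon> gL gR where "\<epsilon> > 0" and smooth: "smooth_real_fun gL" "smooth_real_fun gR"
    and u_left: "\<forall>t\<in>{\<xi>-\<epsilon>..\<xi>}. u t = gL t" and u_right: "\<forall>t\<in>{\<xi>..\<xi>+\<epsilon>}. u t = gR t"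
    and agree: "\<forall>j\<le>k. (vderiv ^^ j) gL \<xi> = (vderiv ^^ j) gR \<xi>"
    and jump: "(vderiv ^^ Suc k) gL \<xi> \<noteq> (vderiv ^^ Suc k) gR \<xi>"
    using assms(1) unfolding breaking_point_def by blast
  define a where "a = (vderiv ^^ Suc k) gR \<xi> - (vderiv ^^ Suc k) gL \<xi>"
  define c0 where "c0 = (a \<bullet> a) / fact (Suc k) / 2"
  have "0 < c0"
    using jump by (simp add: c0_def a_def)
  obtain K where "K \<ge> 0" and pieces: "\<And>\<delta>. 0 < \<delta> \<Longrightarrow> real M * \<delta> \<le> 1 \<Longrightarrow> 2 * c0 * \<delta> ^ Suc k \<le>
      \<bar>fdiff M (\<lambda>j. (if j = M then gR else gL) (\<xi> + (real j + 1 - real M) * \<delta>) \<bullet> a)\<bar> + K * \<delta> ^ Suc (Suc k)"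
    using smooth_pieces_fdiff_lower_bound[OF smooth agree a_def assms(2)] unfolding c0_def by auto
  have "0 < M"
    using assms(2) by simp
  show ?thesis
  proof
    show "0 < c0" and "0 < min (min \<epsilon> 1 / real M) (c0 / (K + 1))"
      using \<open>0 < c0\<close> \<open>0 < M\<close> \<open>\<epsilon> > 0\<close> \<open>K \<ge> 0\<close> by auto
    fix \<delta> :: real
    assume \<delta>: "0 < \<delta>" "\<delta> \<le> min (min \<epsilon> 1 / real M) (c0 / (K + 1))"
    then have M\<delta>: "real M * \<delta> \<le> \<epsilon>" "real M * \<delta> \<le> 1" and "K * \<delta> \<le> c0"
      using \<open>0 < M\<close> \<open>K \<ge> 0\<close> by (auto simp: field_simps)
    have "\<delta> \<le> real M * \<delta>"
      using mult_right_mono[of 1 "real M" \<delta>] \<delta>(1) \<open>0 < M\<close> by simp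
    then have "\<delta> \<le> \<epsilon>"
      using M\<delta>(1) by linarith
    have "u (\<xi> + (real j + 1 - real M) * \<delta>) = (if j = M then gR else gL) (\<xi> + (real j + 1 - real M) * \<delta>)"
      if "j \<le> M" for j
    proof (cases "j = M")
      case True
      then show ?thesis
        using u_right \<delta>(1) \<open>\<delta> \<le> \<epsilon>\<close> by simp
    next
      case False
      have "(real j + 1 - real M) * \<delta> = (real j + 1) * \<delta> - real M * \<delta>"
        by (simp add: algebra_simps)
      moreover have "0 \<le> (real j + 1) * \<delta>"
        using \<delta>(1) by simp
      moreover have "(real j + 1 - real M) * \<delta> \<le> 0"
        using False that \<delta>(1) by (intro mult_nonpos_nonneg) (auto simp: nat_less_real_le)
      ultimately show ?thesis
        using u_left M\<delta>(1) False by simp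
    qed
    then have "fdiff M (\<lambda>j. u (\<xi> + (real j + 1 - real M) * \<delta>) \<bullet> a)
        = fdiff M (\<lambda>j. (if j = M then gR else gL) (\<xi> + (real j + 1 - real M) * \<delta>) \<bullet> a)"
      unfolding fdiff_def by (intro sum.cong) auto
    moreover have "K * \<delta> ^ Suc (Suc k) \<le> c0 * \<delta> ^ Suc k"
      using \<open>K * \<delta> \<le> c0\<close> \<delta>(1) by (simp add: mult_right_mono mult.assoc[symmetric])
    ultimately show "c0 * \<delta> ^ Suc k \<le> \<bar>fdiff M (\<lambda>j. u (\<xi> + (real j + 1 - real M) * \<delta>) \<bullet> a)\<bar>"
      using pieces[OF \<delta>(1) M\<delta>(2)] by simp
  qed
qed

lemma le_powr_inverse_if_power_le:
  fixes x y :: real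
  assumes "0 \<le> x" and "x ^ n \<le> y" and "0 < n"
  shows "x \<le> y powr (1 / real n)"
proof -
  have "x = root n (x ^ n)"
    using assms by (simp add: real_root_pos2)
  also have "\<dots> \<le> root n y"
    using assms by (simp add: real_root_le_mono)
  also have "\<dots> = y powr (1 / real n)"
    using assms by (intro root_powr_inverse) (auto intro: order_trans[OF zero_le_power])
  finally show ?thesis .
qed

lemma fdiff_inner_approx_poly_bound:
  fixes u v :: "real \<Rightarrow> 'a::real_inner"
  assumes "degree Q < M" and "\<forall>x\<in>S. v x \<bullet> a = poly Q x" and "\<forall>x\<in>S. norm (u x - v x) \<le> E"
    and "\<And>j. j \<le> M \<Longrightarrow> \<alpha> + \<beta> * real j \<in> S"
  shows "\<bar>fdiff M (\<lambda>j. u (\<alpha> + \<beta> * real j) \<bullet> a)\<bar> \<le> 2 ^ M * (norm a * E)"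
proof (rule fdiff_near_affine_poly[OF assms(1)])
  fix j
  assume "j \<le> M"
  then have x: "\<alpha> + \<beta> * real j \<in> S"
    by (rule assms(4))
  then have "\<bar>u (\<alpha> + \<beta> * real j) \<bullet> a - poly Q (\<alpha> + \<beta> * real j)\<bar>
      = \<bar>(u (\<alpha> + \<beta> * real j) - v (\<alpha> + \<beta> * real j)) \<bullet> a\<bar>"
    using assms(2) by (simp add: inner_diff_left)
  also have "\<dots> \<le> norm (u (\<alpha> + \<beta> * real j) - v (\<alpha> + \<beta> * real j)) * norm a"
    by (rule Cauchy_Schwarz_ineq2)
  also have "\<dots> \<le> E * norm a"
    using assms(3) x by (simp add: mult_right_mono)
  finally show "\<bar>u (\<alpha> + \<beta> * real j) \<bullet> a - poly Q (\<alpha> + \<beta> * real j)\<bar> \<le> norm a * E"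
    by (simp add: mult.commute)
qed

lemma breaking_point_near_end_of_poly_piece:
  fixes u :: "real \<Rightarrow> 'a::real_inner"
  assumes "breaking_point u \<xi> k"
  obtains C \<delta>0 where "0 \<le> C" and "0 < \<delta>0" and
    "\<And>l r v E. l < \<xi> \<Longrightarrow> \<xi> \<le> r \<Longrightarrow> r - l \<le> \<delta>0 \<Longrightarrow> 0 \<le> E \<Longrightarrow>
       (\<And>a. \<exists>Q. degree Q \<le> m \<and> (\<forall>x\<in>{l<..r}. v x \<bullet> a = poly Q x)) \<Longrightarrow>
       (\<And>x. x \<in> {l<..r} \<Longrightarrow> norm (u x - v x) \<le> E) \<Longrightarrow>
       \<exists>x\<in>{l, r}. \<bar>x - \<xi>\<bar> \<le> C * E powr (1 / real (Suc k))"
proof -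
  define M where "M = Suc (Suc (m + k))"
  then have "Suc (Suc k) \<le> M"
    by simp
  obtain a c0 \<delta>0 where "0 < c0" "0 < \<delta>0" and lower: "\<And>\<delta>. 0 < \<delta> \<Longrightarrow> \<delta> \<le> \<delta>0 \<Longrightarrow>
      c0 * \<delta> ^ Suc k \<le> \<bar>fdiff M (\<lambda>j. u (\<xi> + (real j + 1 - real M) * \<delta>) \<bullet> a)\<bar>"
    using breaking_point_fdiff_lower_bound[OF assms \<open>Suc (Suc k) \<le> M\<close>] by metis
  define C where "C = real M * (2 ^ M * norm a / c0) powr (1 / real (Suc k))"
  show ?thesis
  proof
    show "0 \<le> C" "0 < \<delta>0"
      using \<open>0 < \<delta>0\<close> by (auto simp: C_def)
    fix l r E and v :: "real \<Rightarrow> 'a"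
    assume lr: "l < \<xi>" "\<xi> \<le> r" "r - l \<le> \<delta>0" and "0 \<le> E"
      and poly_piece: "\<And>a. \<exists>Q. degree Q \<le> m \<and> (\<forall>x\<in>{l<..r}. v x \<bullet> a = poly Q x)"
      and close: "\<And>x. x \<in> {l<..r} \<Longrightarrow> norm (u x - v x) \<le> E"
    define d where "d = min (\<xi> - l) (r - \<xi>)"
    have "d \<le> C * E powr (1 / real (Suc k))"
    proof (cases "d = 0")
      case True
      then show ?thesis
        using \<open>0 \<le> C\<close> by simp
    next
      case False
      define \<delta> where "\<delta> = d / real M"
      have "0 < d" "d \<le> r - l"
        using False lr by (auto simp: d_def)
      then have "0 < \<delta>" "\<delta> \<le> d"
        by (auto simp: \<delta>_def M_def field_simps)
      have d_eq: "d = real M * \<delta>"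
        by (simp add: \<delta>_def M_def)
      have nodes: "\<xi> + (real j + 1 - real M) * \<delta> = (\<xi> + (1 - real M) * \<delta>) + \<delta> * real j" for j
        by (simp add: algebra_simps)
      have "(\<xi> + (1 - real M) * \<delta>) + \<delta> * real j \<in> {l<..r}" if "j \<le> M" for j
      proof -
        have "(real j + 1 - real M) * \<delta> \<le> 1 * \<delta>"
          using that \<open>0 < \<delta>\<close> by (intro mult_right_mono) auto
        then have "(\<xi> + (1 - real M) * \<delta>) + \<delta> * real j \<le> \<xi> + \<delta>"
          using nodes[of j] by simp
        moreover have "\<xi> - d < (\<xi> + (1 - real M) * \<delta>) + \<delta> * real j"
          using \<open>0 < \<delta>\<close> d_eq by (simp add: algebra_simps add_pos_nonneg)
        ultimately show ?thesis
          using \<open>\<delta> \<le> d\<close> by (auto simp: d_def)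
      qed
      moreover obtain Q where "degree Q \<le> m" and "\<forall>x\<in>{l<..r}. v x \<bullet> a = poly Q x"
        using poly_piece by blast
      ultimately have "\<bar>fdiff M (\<lambda>j. u (\<xi> + (real j + 1 - real M) * \<delta>) \<bullet> a)\<bar> \<le> 2 ^ M * (norm a * E)"
        unfolding nodes using close by (intro fdiff_inner_approx_poly_bound) (auto simp: M_def)
      with lower[OF \<open>0 < \<delta>\<close>] have "\<delta> ^ Suc k \<le> (2 ^ M * norm a / c0) * E"
        using \<open>0 < c0\<close> \<open>\<delta> \<le> d\<close> \<open>d \<le> r - l\<close> lr(3) by (simp add: field_simps)
      then have "\<delta> \<le> ((2 ^ M * norm a / c0) * E) powr (1 / real (Suc k))"
        using \<open>0 < \<delta>\<close> by (intro le_powr_inverse_if_power_le) auto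
      also have "\<dots> = (2 ^ M * norm a / c0) powr (1 / real (Suc k)) * E powr (1 / real (Suc k))"
        using \<open>0 < c0\<close> \<open>0 \<le> E\<close> by (intro powr_mult)
      finally show ?thesis
        using d_eq by (simp add: C_def mult.assoc mult_left_mono)
    qed
    then show "\<exists>x\<in>{l, r}. \<bar>x - \<xi>\<bar> \<le> C * E powr (1 / real (Suc k))"
      using lr unfolding d_def min_def by (auto split: if_splits)
  qed
qed

lemma fcrk_solution_step_poly:
  fixes a :: "'a::real_inner"
  assumes "fcrk_solution s A At c B f \<tau> \<phi> t0 tm uh" and "tm n < tm (Suc n)"
  shows "\<exists>Q. degree Q \<le> (\<Sum>i<s. degree (B i)) \<and> (\<forall>x\<in>{tm n<..tm (Suc n)}. uh x \<bullet> a = poly Q x)"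
proof -
  define hn where "hn = tm (Suc n) - tm n"
  have "hn > 0"
    using assms(2) by (simp add: hn_def)
  obtain K :: "nat \<Rightarrow> 'a" where K: "\<And>\<theta>. \<theta> \<in> {0<..1} \<Longrightarrow>
      uh (tm n + \<theta> * hn) = uh (tm n) + hn *\<^sub>R (\<Sum>i<s. poly (B i) \<theta> *\<^sub>R K i)"
    using assms(1) unfolding fcrk_solution_def Let_def hn_def by blast
  define P where "P = [:uh (tm n) \<bullet> a:] + smult hn (\<Sum>i<s. smult (K i \<bullet> a) (B i))"
  define Q where "Q = P \<circ>\<^sub>p [:- tm n / hn, 1 / hn:]"
  have "degree (\<Sum>i<s. smult (K i \<bullet> a) (B i)) \<le> (\<Sum>i<s. degree (B i))"
    by (intro degree_sum_le) (auto intro: order_trans[OF degree_smult_le] member_le_sum)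
  then have "degree P \<le> (\<Sum>i<s. degree (B i))"
    unfolding P_def by (intro degree_add_le) (auto intro: order_trans[OF degree_smult_le])
  moreover have "degree Q = degree P"
    using \<open>hn > 0\<close> by (simp add: Q_def degree_pcompose)
  moreover have "uh x \<bullet> a = poly Q x" if "x \<in> {tm n<..tm (Suc n)}" for x
  proof -
    define \<theta> where "\<theta> = (x - tm n) / hn"
    have "\<theta> \<in> {0<..1}" and "x = tm n + \<theta> * hn"
      using that \<open>hn > 0\<close> by (auto simp: \<theta>_def hn_def field_simps)
    then have "uh x \<bullet> a = poly P \<theta>"
      using K by (simp add: P_def inner_add_left inner_sum_left poly_sum sum_distrib_left algebra_simps)
    also have "\<theta> = - tm n / hn + x * (1 / hn)"
      by (simp add: \<theta>_def diff_divide_distrib)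
    finally show ?thesis
      by (simp add: Q_def poly_pcompose)
  qed
  ultimately show ?thesis
    by (intro exI[of _ Q] conjI ballI) simp_all
qed

lemma admissible_mesh_step_containing:
  assumes "admissible_mesh t0 T h tm" and "t0 < \<xi>" and "\<xi> < T"
  obtains n where "t0 \<le> tm n" and "tm n < \<xi>" and "\<xi> \<le> tm (Suc n)" and "tm (Suc n) - tm n \<le> h"
proof -
  have start: "tm 0 = t0" and step: "\<And>n. tm n < tm (Suc n) \<and> tm (Suc n) - tm n \<le> h"
    and "\<exists>N. T \<le> tm N"
    using assms(1) unfolding admissible_mesh_def by blast+
  have mono: "tm 0 \<le> tm n" for n
  proof (rule lift_Suc_mono_le)
    show "tm n \<le> tm (Suc n)" for n
      using step[of n] by simp
  qed simp
  have "\<exists>n. tm n < \<xi> \<and> \<xi> \<le> tm (Suc n)"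
  proof (rule ccontr)
    assume none: "\<not> ?thesis"
    have "tm n < \<xi>" for n
    proof (induction n)
      case 0
      then show ?case using start assms(2) by simp
    next
      case (Suc n)
      then show ?case using none by force
    qed
    moreover obtain N where "T \<le> tm N"
      using \<open>\<exists>N. T \<le> tm N\<close> ..
    ultimately show False
      using assms(3) by (meson less_le_trans not_less_iff_gr_or_eq)
  qed
  then obtain n where "tm n < \<xi>" and "\<xi> \<le> tm (Suc n)"
    by blast
  then show ?thesis
    using that[of n] mono[of n] start step[of n] by simp
qed

lemma global_orderE:
  assumes "global_order H t0 T u uh p"
  obtains C h0 where "0 \<le> C" and "0 < h0" and
    "\<And>h t. 0 < h \<Longrightarrow> h \<le> h0 \<Longrightarrow> h \<le> H \<Longrightarrow> t \<in> {t0..T} \<Longrightarrow> norm (u t - uh h t) \<le> C * h ^ p"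
proof -
  obtain C h0 where "0 < h0" and bound: "\<forall>h. 0 < h \<and> h \<le> h0 \<and> h \<le> H \<longrightarrow>
      (\<forall>t\<in>{t0..T}. norm (u t - uh h t) \<le> C * h ^ p)"
    using assms unfolding global_order_def by blast
  show ?thesis
  proof
    show "0 \<le> \<bar>C\<bar>" and "0 < h0"
      using \<open>0 < h0\<close> by simp_all
    fix h t
    assume "0 < h" "h \<le> h0" "h \<le> H" "t \<in> {t0..T}"
    then have "norm (u t - uh h t) \<le> C * h ^ p"
      using bound by blast
    also have "\<dots> \<le> \<bar>C\<bar> * h ^ p"
      using \<open>0 < h\<close> by (intro mult_right_mono) auto
    finally show "norm (u t - uh h t) \<le> \<bar>C\<bar> * h ^ p" .
  qed
qed

theorem theorem4:
  fixes f :: "real \<times> 'a::euclidean_space \<times> 'a \<Rightarrow> 'a"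
    and \<tau> :: "real \<Rightarrow> 'a \<Rightarrow> real" and \<phi> :: "real \<Rightarrow> 'a" and u :: "real \<Rightarrow> 'a"
    and t0 T \<tau>max \<xi> H :: real and k p s :: nat
    and A :: "nat \<Rightarrow> nat \<Rightarrow> real" and At :: "nat \<Rightarrow> nat \<Rightarrow> real \<Rightarrow> real"
    and c :: "nat \<Rightarrow> real" and B :: "nat \<Rightarrow> real poly"
    and mesh :: "real \<Rightarrow> nat \<Rightarrow> real" and uh :: "real \<Rightarrow> real \<Rightarrow> 'a"
  assumes "smooth_map f"
    and "0 \<le> \<tau>max" and "t0 < T"
    and "dde_solution f \<tau> \<phi> \<tau>max t0 T u"
    and "t0 < \<xi>" and "\<xi> < T"
    and "breaking_point u \<xi> k"
    and "0 < H"
    and "\<forall>h\<in>{0<..H}. admissible_mesh t0 T h (mesh h) \<and>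
                      fcrk_solution s A At c B f \<tau> \<phi> t0 (mesh h) (uh h)"
    and "global_order H t0 T u uh p"
    and "k < p"
  shows "\<exists>C h0. 0 < h0 \<and> (\<forall>h. 0 < h \<and> h \<le> h0 \<and> h \<le> H \<longrightarrow>
           (\<exists>n. \<bar>mesh h n - \<xi>\<bar> \<le> C * h powr (real p / real (Suc k))))"
proof -
  obtain C \<delta>0 where "0 \<le> C" "0 < \<delta>0" and near_end: "\<And>l r v E. l < \<xi> \<Longrightarrow> \<xi> \<le> r \<Longrightarrow>
      r - l \<le> \<delta>0 \<Longrightarrow> 0 \<le> E \<Longrightarrow>
      (\<And>a. \<exists>Q. degree Q \<le> (\<Sum>i<s. degree (B i)) \<and> (\<forall>x\<in>{l<..r}. v x \<bullet> a = poly Q x)) \<Longrightarrow>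
      (\<And>x. x \<in> {l<..r} \<Longrightarrow> norm (u x - v x) \<le> E) \<Longrightarrow>
      \<exists>x\<in>{l, r}. \<bar>x - \<xi>\<bar> \<le> C * E powr (1 / real (Suc k))"
    using breaking_point_near_end_of_poly_piece[OF assms(7)] by metis
  obtain Cg hg where "0 \<le> Cg" "0 < hg" and error: "\<And>h t. 0 < h \<Longrightarrow> h \<le> hg \<Longrightarrow> h \<le> H \<Longrightarrow>
      t \<in> {t0..T} \<Longrightarrow> norm (u t - uh h t) \<le> Cg * h ^ p"
    using global_orderE[OF assms(10)] by metis
  show ?thesis
  proof (rule exI[of _ "C * Cg powr (1 / real (Suc k))"], rule exI[of _ "min hg (min \<delta>0 (T - \<xi>))"],
      intro conjI allI impI)
    show "0 < min hg (min \<delta>0 (T - \<xi>))"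
      using \<open>0 < hg\<close> \<open>0 < \<delta>0\<close> assms(6) by simp
    fix h :: real
    assume h: "0 < h \<and> h \<le> min hg (min \<delta>0 (T - \<xi>)) \<and> h \<le> H"
    then have "admissible_mesh t0 T h (mesh h)" and fcrk: "fcrk_solution s A At c B f \<tau> \<phi> t0 (mesh h) (uh h)"
      using assms(9) by auto
    then obtain n where n: "t0 \<le> mesh h n" "mesh h n < \<xi>" "\<xi> \<le> mesh h (Suc n)" "mesh h (Suc n) - mesh h n \<le> h"
      using admissible_mesh_step_containing assms(5,6) by blast
    have "\<exists>x\<in>{mesh h n, mesh h (Suc n)}. \<bar>x - \<xi>\<bar> \<le> C * (Cg * h ^ p) powr (1 / real (Suc k))"
      using n h \<open>0 \<le> Cg\<close> fcrk_solution_step_poly[OF fcrk] error by (intro near_end[where v = "uh h"]) auto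
    moreover have "(Cg * h ^ p) powr (1 / real (Suc k)) = Cg powr (1 / real (Suc k)) * h powr (real p / real (Suc k))"
      using h \<open>0 \<le> Cg\<close> by (simp add: powr_mult powr_realpow[symmetric] powr_powr)
    ultimately show "\<exists>n. \<bar>mesh h n - \<xi>\<bar> \<le> C * Cg powr (1 / real (Suc k)) * h powr (real p / real (Suc k))"
      by (auto simp: mult.assoc)
  qed
qed

end
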